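(* Let $f:\mathbb{R}^n\to\mathbb{R}\cup\{+\infty\}$ and $g:\mathbb{R}^m\to\mathbb{R}\cup\{+\infty\}$ be proper, closed, convex functions, and let $A\in\mathbb{R}^{p\times n}$, $B\in\mathbb{R}^{p\times m}$, $c\in\mathbb{R}^p$. Consider the problem $$\min_{x\in\mathbb{R}^n,\,z\in\mathbb{R}^m} f(x)+g(z)\quad\text{subject to}\quad Ax+Bz=c,$$ and assume that the Lagrangian $\mathcal{L}_0(x,z,y)=f(x)+g(z)+y^T(Ax+Bz-c)$ has a saddle point (the min-max and max-min of $\mathcal{L}_0$ over $(x,z)\in\mathbb{R}^n\times\mathbb{R}^m$, $y\in\mathbb{R}^p$ coincide and are attained). Let $$M_0=\begin{pmatrix}0 & 0 & A^T\\ 0 & 0 & B^T\\ -A & -B & 0_{p\times p}\end{pmatrix},$$ let $L>0$ satisfy $\|M_0\|_2\le L$, and let $\eta\in(0,\frac{1}{2L})$. For arbitrary initial points $x_0,x_{-1}\in\mathbb{R}^n$, $z_0,z_{-1}\in\mathbb{R}^m$, $y_0,y_{-1}\in\mathbb{R}^p$, define for $k=0,1,2,\dots$: $$\hat x_k=x_k-2\eta A^Ty_k+\eta A^Ty_{k-1},\qquad \hat z_k=z_k-2\eta B^Ty_k+\eta B^Ty_{k-1},$$ $$x_{k+1}=\arg\min_{u\in\mathbb{R}^n}\Big(\eta f(u)+\tfrac12\|u-\hat x_k\|_2^2\Big),\qquad z_{k+1}=\arg\min_{r\in\mathbb{R}^m}\Big(\eta g(r)+\tfrac12\|r-\hat z_k\|_2^2\Big),$$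 $$y_{k+1}=y_k+2\eta Ax_k+2\eta Bz_k-\eta Ax_{k-1}-\eta Bz_{k-1}-\eta c.$$ Then $\{x_k\}$ and $\{z_k\}$ converge, and their limit $(x^*,z^* )$ is a solution of the optimization problem.
   Context: $\|\cdot\|_2$ denotes the Euclidean norm on vectors and the spectral norm (largest singular value) on matrices. *)

theory Defs
  imports "HOL-Analysis.Analysis" "HOL-Library.Extended_Real"
begin

text \<open>Extended-real-valued functions R^n -> R \<union> {+inf}; values are ereal, -inf excluded by properness.\<close>

definition proper_fun :: "('a \<Rightarrow> ereal) \<Rightarrow> bool" where
  "proper_fun f \<longleftrightarrow> (\<forall>x. f x \<noteq> -\<infinity>) \<and> (\<exists>x. f x \<noteq> \<infinity>)"

definition ext_convex :: "('a::real_vector \<Rightarrow> ereal) \<Rightarrow> bool" where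
  "ext_convex f \<longleftrightarrow> (\<forall>x y t. 0 \<le> t \<and> t \<le> 1 \<longrightarrow>
      f ((1 - t) *\<^sub>R x + t *\<^sub>R y) \<le> ereal (1 - t) * f x + ereal t * f y)"

definition closed_fun :: "('a::topological_space \<Rightarrow> ereal) \<Rightarrow> bool" where
  "closed_fun f \<longleftrightarrow> closed {(x, r::real). f x \<le> ereal r}"

definition M0_map :: "real^'n^'p \<Rightarrow> real^'m^'p \<Rightarrow>
    ((real^'n) \<times> (real^'m) \<times> (real^'p)) \<Rightarrow> ((real^'n) \<times> (real^'m) \<times> (real^'p))" where
  "M0_map A B = (\<lambda>(x, z, y). (transpose A *v y, transpose B *v y, - (A *v x) - (B *v z)))"

definition lagrangian0 :: "(real^'n \<Rightarrow> ereal) \<Rightarrow> (real^'m \<Rightarrow> ereal) \<Rightarrow> real^'n^'p \<Rightarrow> real^'m^'p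
    \<Rightarrow> real^'p \<Rightarrow> real^'n \<Rightarrow> real^'m \<Rightarrow> real^'p \<Rightarrow> ereal" where
  "lagrangian0 f g A B c x z y = f x + g z + ereal (y \<bullet> (A *v x + B *v z - c))"

definition has_saddle_point :: "('a \<Rightarrow> 'b \<Rightarrow> ereal) \<Rightarrow> bool" where
  "has_saddle_point L \<longleftrightarrow> (\<exists>w\<^sub>0 y\<^sub>0. \<forall>w y. L w\<^sub>0 y \<le> L w\<^sub>0 y\<^sub>0 \<and> L w\<^sub>0 y\<^sub>0 \<le> L w y\<^sub>0)"

end

(*
  Writing w = (x, z, y), the iteration is the forward-reflected-backward method
  w_(k+1) = (I + \<eta> G)^(-1) (w_k - \<eta> (2 F w_k - F w_(k-1))) for the monotone operator
  G = \<partial>f \<times> \<partial>g \<times> {0} with closed graph and the skew, L-Lipschitz affine operator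
  F w = M_0 w + (0, 0, c). The zeros of F + G are the KKT points of the problem, and one exists
  because the Lagrangian has a saddle point. For every zero S the energy
  |w_k - S|^2 - 2 \<eta> <F w_k - F w_(k-1), w_k - S> + \<eta> L |w_k - w_(k-1)|^2
  is nonnegative and drops by at least (1 - 2 \<eta> L) |w_(k+1) - w_k|^2 per step, so the increments
  vanish and the iterates are bounded. A cluster point is then a zero, by closedness of the graph
  of G, and the energy relative to this cluster point tends to 0 along the whole sequence.
  Finally, every KKT point is a minimizer.
*)

theory Submission
  imports Defs
begin

lemma lipschitz_inner_bound:
  fixes a b u :: "'a::real_inner"
  assumes lip: "norm (F b - F a) \<le> L * norm (b - a)" and L: "0 \<le> L"
  shows "2 * \<bar>inner (F b - F a) u\<bar> \<le> L * (norm (b - a)^2 + norm u^2)"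
proof -
  have "\<bar>inner (F b - F a) u\<bar> \<le> L * norm (b - a) * norm u"
    using Cauchy_Schwarz_ineq2 lip mult_right_mono norm_ge_zero order_trans by metis
  moreover have "0 \<le> L * (norm (b - a) - norm u)^2"
    using L by simp
  ultimately show ?thesis
    by (simp add: power2_eq_square algebra_simps)
qed

lemma norm_power2_tendsto_zeroD:
  fixes X :: "nat \<Rightarrow> 'a::real_normed_vector"
  assumes "(\<lambda>n. norm (X n)^2) \<longlonglongrightarrow> 0"
  shows "X \<longlonglongrightarrow> 0"
proof -
  have "(\<lambda>n. sqrt (norm (X n)^2)) \<longlonglongrightarrow> sqrt 0"
    using assms by (intro tendsto_intros)
  then show ?thesis
    by (simp add: tendsto_norm_zero_iff)
qed

definition frb_energy :: "('a::real_inner \<Rightarrow> 'a) \<Rightarrow> real \<Rightarrow> real \<Rightarrow> 'a \<Rightarrow> 'a \<Rightarrow> 'a \<Rightarrow> real" where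
  "frb_energy F \<eta> L S a b =
     norm (b - S)^2 - 2 * \<eta> * inner (F b - F a) (b - S) + \<eta> * L * norm (b - a)^2"

lemma frb_energy_descent:
  fixes a b w S :: "'a::real_inner"
  assumes vi: "inner (b - \<eta> *\<^sub>R (2 *\<^sub>R F b - F a) - w) (S - w) \<le> \<eta> * inner (F S) (w - S)"
    and mono: "0 \<le> inner (F w - F S) (w - S)"
    and lip: "norm (F b - F a) \<le> L * norm (b - a)"
    and \<eta>: "0 < \<eta>" and L: "0 \<le> L"
  shows "frb_energy F \<eta> L S b w + (1 - 2 * \<eta> * L) * norm (w - b)^2
         \<le> frb_energy F \<eta> L S a b"
proof -
  define i1 i2 i3 where "i1 = inner (F b - F a) (b - S)" and "i2 = inner (F b - F a) (w - b)"
    and "i3 = inner (F w - F b) (w - S)"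
  have "2 * inner (w - b) (w - S) = norm (w - b)^2 + norm (w - S)^2 - norm (b - S)^2"
    by (simp add: power2_norm_eq_inner inner_diff_left inner_diff_right inner_commute algebra_simps)
  moreover have "inner (w - b) (w - S) + \<eta> * (inner (2 *\<^sub>R F b - F a) (w - S) - inner (F S) (w - S)) \<le> 0"
    using vi by (simp add: inner_diff_left inner_diff_right inner_commute algebra_simps)
  moreover have "inner (2 *\<^sub>R F b - F a) (w - S) - inner (F S) (w - S) \<ge> i1 + i2 - i3"
    using mono unfolding i1_def i2_def i3_def by (simp add: inner_diff_left inner_diff_right algebra_simps)
  then have "\<eta> * (inner (2 *\<^sub>R F b - F a) (w - S) - inner (F S) (w - S)) \<ge> \<eta> * i1 + \<eta> * i2 - \<eta> * i3"
    using \<eta> by (simp add: mult_left_mono flip: distrib_left right_diff_distrib)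
  moreover have young: "- i2 \<le> L * (norm (b - a)^2 + norm (w - b)^2) / 2"
    using lipschitz_inner_bound[OF lip L, of "w - b"] unfolding i2_def by linarith
  then have "- (\<eta> * i2) \<le> \<eta> * L * norm (b - a)^2 / 2 + \<eta> * L * norm (w - b)^2 / 2"
    using mult_left_mono[OF young, of \<eta>] \<eta> by (simp add: algebra_simps)
  ultimately have "norm (w - S)^2 - 2 * (\<eta> * i3) + norm (w - b)^2 - \<eta> * L * norm (w - b)^2
      \<le> norm (b - S)^2 - 2 * (\<eta> * i1) + \<eta> * L * norm (b - a)^2"
    by linarith
  then show ?thesis
    unfolding frb_energy_def i1_def i3_def by (simp add: algebra_simps)
qed

lemma frb_energy_lower:
  fixes a b S :: "'a::real_inner"
  assumes lip: "norm (F b - F a) \<le> L * norm (b - a)" and \<eta>: "0 < \<eta>" and L: "0 \<le> L"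
  shows "(1 - \<eta> * L) * norm (b - S)^2 \<le> frb_energy F \<eta> L S a b"
proof -
  have "2 * inner (F b - F a) (b - S) \<le> L * (norm (b - a)^2 + norm (b - S)^2)"
    using lipschitz_inner_bound[OF lip L, of "b - S"] by linarith
  then have "\<eta> * (2 * inner (F b - F a) (b - S)) \<le> \<eta> * (L * (norm (b - a)^2 + norm (b - S)^2))"
    using \<eta> by (intro mult_left_mono) auto
  then show ?thesis
    unfolding frb_energy_def by (simp add: algebra_simps)
qed

lemma frb_energy_upper:
  fixes a b S :: "'a::real_inner"
  assumes lip: "norm (F b - F a) \<le> L * norm (b - a)" and \<eta>: "0 < \<eta>" and L: "0 \<le> L"
  shows "frb_energy F \<eta> L S a b \<le> (1 + \<eta> * L) * norm (b - S)^2 + 2 * \<eta> * L * norm (b - a)^2"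
proof -
  have "- 2 * inner (F b - F a) (b - S) \<le> L * (norm (b - a)^2 + norm (b - S)^2)"
    using lipschitz_inner_bound[OF lip L, of "b - S"] by linarith
  then have "\<eta> * (- 2 * inner (F b - F a) (b - S)) \<le> \<eta> * (L * (norm (b - a)^2 + norm (b - S)^2))"
    using \<eta> by (intro mult_left_mono) auto
  then show ?thesis
    unfolding frb_energy_def by (simp add: algebra_simps)
qed

locale forward_reflected_backward =
  fixes G :: "('a::euclidean_space \<times> 'a) set" and F :: "'a \<Rightarrow> 'a" and \<eta> L :: real
    and P :: "nat \<Rightarrow> 'a"
  assumes G_monotone: "\<And>u q v s. (u, q) \<in> G \<Longrightarrow> (v, s) \<in> G \<Longrightarrow> 0 \<le> inner (q - s) (u - v)"
    and G_closed: "closed G"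
    and F_monotone: "\<And>u v. 0 \<le> inner (F u - F v) (u - v)"
    and F_lipschitz: "\<And>u v. norm (F u - F v) \<le> L * norm (u - v)"
    and L_nonneg: "0 \<le> L" and step_pos: "0 < \<eta>" and step_small: "2 * \<eta> * L < 1"
    \<comment> \<open>P (n + 2) = (I + \<eta> G)^(-1) (reflected point), stated through the graph of G\<close>
    and iteration: "\<And>n. (P (Suc (Suc n)),
       (P (Suc n) - \<eta> *\<^sub>R (2 *\<^sub>R F (P (Suc n)) - F (P n)) - P (Suc (Suc n))) /\<^sub>R \<eta>) \<in> G"
begin

definition zeros :: "'a set" where
  "zeros = {S. (S, - F S) \<in> G}"

abbreviation energy :: "'a \<Rightarrow> nat \<Rightarrow> real" where
  "energy S n \<equiv> frb_energy F \<eta> L S (P n) (P (Suc n))"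

lemma one_minus_step_L_pos: "0 < 1 - \<eta> * L"
proof -
  have "0 \<le> \<eta> * L"
    using step_pos L_nonneg by simp
  then show ?thesis
    using step_small by linarith
qed

lemma zero_variational_inequality:
  assumes "S \<in> zeros"
  shows "inner (P (Suc n) - \<eta> *\<^sub>R (2 *\<^sub>R F (P (Suc n)) - F (P n)) - P (Suc (Suc n))) (S - P (Suc (Suc n)))
         \<le> \<eta> * inner (F S) (P (Suc (Suc n)) - S)"
proof -
  define v where "v = P (Suc n) - \<eta> *\<^sub>R (2 *\<^sub>R F (P (Suc n)) - F (P n)) - P (Suc (Suc n))"
  have "0 \<le> inner (v /\<^sub>R \<eta> + F S) (P (Suc (Suc n)) - S)"
    using G_monotone[OF iteration[of n]] assms unfolding zeros_def v_def by fastforce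
  then have "0 \<le> \<eta> * inner (v /\<^sub>R \<eta> + F S) (P (Suc (Suc n)) - S)"
    using step_pos by simp
  moreover have "\<eta> * inner (v /\<^sub>R \<eta> + F S) (P (Suc (Suc n)) - S)
      = inner v (P (Suc (Suc n)) - S) + \<eta> * inner (F S) (P (Suc (Suc n)) - S)"
    using step_pos by (simp add: inner_add_left distrib_left)
  moreover have "inner v (S - P (Suc (Suc n))) = - inner v (P (Suc (Suc n)) - S)"
    by (simp add: inner_diff_right)
  ultimately show ?thesis
    unfolding v_def[symmetric] by linarith
qed

lemma energy_descent:
  assumes "S \<in> zeros"
  shows "energy S (Suc n) + (1 - 2 * \<eta> * L) * norm (P (Suc (Suc n)) - P (Suc n))^2 \<le> energy S n"
  by (rule frb_energy_descent[OF zero_variational_inequality[OF assms] F_monotone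
        F_lipschitz step_pos L_nonneg])

lemma energy_lower: "(1 - \<eta> * L) * norm (P (Suc n) - S)^2 \<le> energy S n"
  by (rule frb_energy_lower[OF F_lipschitz step_pos L_nonneg])

lemma energy_nonneg: "0 \<le> energy S n"
proof -
  have "0 \<le> (1 - \<eta> * L) * norm (P (Suc n) - S)^2"
    using one_minus_step_L_pos by simp
  then show ?thesis
    using energy_lower[of n S] by linarith
qed

lemma energy_decseq:
  assumes "S \<in> zeros"
  shows "decseq (energy S)"
proof (rule decseq_SucI)
  fix n
  have "0 \<le> (1 - 2 * \<eta> * L) * norm (P (Suc (Suc n)) - P (Suc n))^2"
    using step_small by simp
  then show "energy S (Suc n) \<le> energy S n"
    using energy_descent[OF assms, of n] by linarith
qed

lemma increments_tendsto_zero: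
  assumes "S \<in> zeros"
  shows "(\<lambda>n. P (Suc n) - P n) \<longlonglongrightarrow> 0"
proof -
  define d where "d n = (1 - 2 * \<eta> * L) * norm (P (Suc (Suc n)) - P (Suc n))^2" for n
  have telescope: "(\<Sum>i<n. d i) \<le> energy S 0 - energy S n" for n
  proof (induction n)
    case (Suc n)
    then show ?case
      using energy_descent[OF assms, of n] by (simp add: d_def)
  qed simp
  have "summable d"
  proof (rule summableI_nonneg_bounded)
    show "0 \<le> d n" for n
      using step_small by (simp add: d_def)
    show "sum d {..<n} \<le> energy S 0" for n
      using telescope[of n] energy_nonneg[of S n] by linarith
  qed
  then have "(\<lambda>n. d n / (1 - 2 * \<eta> * L)) \<longlonglongrightarrow> 0 / (1 - 2 * \<eta> * L)"
    by (intro tendsto_intros summable_LIMSEQ_zero) (use step_small in auto)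
  then have "(\<lambda>n. norm (P (Suc (Suc n)) - P (Suc n))^2) \<longlonglongrightarrow> 0"
    using step_small by (simp add: d_def)
  then have "(\<lambda>n. P (Suc (Suc n)) - P (Suc n)) \<longlonglongrightarrow> 0"
    by (rule norm_power2_tendsto_zeroD)
  then show ?thesis
    by (rule LIMSEQ_imp_Suc)
qed

lemma bounded_iterates:
  assumes "S \<in> zeros"
  shows "bounded (range (\<lambda>n. P (Suc n)))"
proof -
  define R where "R = sqrt (energy S 0 / (1 - \<eta> * L))"
  have "norm (P (Suc n) - S) \<le> R" for n
  proof -
    have "(1 - \<eta> * L) * norm (P (Suc n) - S)^2 \<le> energy S 0"
      using energy_lower[of n S] decseqD[OF energy_decseq[OF assms], of 0 n] by linarith
    then show ?thesis
      using one_minus_step_L_pos by (simp add: R_def real_le_rsqrt field_simps)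
  qed
  then have "range (\<lambda>n. P (Suc n)) \<subseteq> cball S R"
    by (auto simp: dist_norm norm_minus_commute)
  then show ?thesis
    by (rule bounded_subset[OF bounded_cball])
qed

lemma F_tendsto:
  assumes "X \<longlonglongrightarrow> S"
  shows "(\<lambda>j. F (X j)) \<longlonglongrightarrow> F S"
proof (rule Lim_null_comparison[where g="\<lambda>j. L * norm (X j - S)", THEN LIM_zero_cancel])
  show "\<forall>\<^sub>F j in sequentially. norm (F (X j) - F S) \<le> L * norm (X j - S)"
    using F_lipschitz by simp
  show "(\<lambda>j. L * norm (X j - S)) \<longlonglongrightarrow> 0"
    using assms by (intro tendsto_mult_right_zero tendsto_norm_zero LIM_zero)
qed

lemma cluster_point_in_zeros:
  assumes r: "strict_mono r" and sub: "(\<lambda>j. P (Suc (r j))) \<longlonglongrightarrow> S"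
    and increments: "(\<lambda>n. P (Suc n) - P n) \<longlonglongrightarrow> 0"
  shows "S \<in> zeros"
proof -
  have "(\<lambda>j. P (Suc (r j)) - P (r j)) \<longlonglongrightarrow> 0"
    using LIMSEQ_subseq_LIMSEQ[OF increments r] by (simp add: o_def)
  from tendsto_diff[OF sub this] have before: "(\<lambda>j. P (r j)) \<longlonglongrightarrow> S"
    by simp
  have "(\<lambda>j. P (Suc (Suc (r j))) - P (Suc (r j))) \<longlonglongrightarrow> 0"
    using LIMSEQ_subseq_LIMSEQ[OF LIMSEQ_Suc[OF increments] r] by (simp add: o_def)
  from tendsto_add[OF sub this] have after: "(\<lambda>j. P (Suc (Suc (r j)))) \<longlonglongrightarrow> S"
    by simp
  have "(\<lambda>j. (P (Suc (Suc (r j))), (P (Suc (r j)) - \<eta> *\<^sub>R (2 *\<^sub>R F (P (Suc (r j))) - F (P (r j)))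
      - P (Suc (Suc (r j)))) /\<^sub>R \<eta>))
      \<longlonglongrightarrow> (S, (S - \<eta> *\<^sub>R (2 *\<^sub>R F S - F S) - S) /\<^sub>R \<eta>)"
    by (intro tendsto_intros sub before after F_tendsto)
  moreover have "(S - \<eta> *\<^sub>R (2 *\<^sub>R F S - F S) - S) /\<^sub>R \<eta> = - F S"
    using step_pos by (simp add: scaleR_2)
  ultimately show ?thesis
    unfolding zeros_def using closed_sequentially[OF G_closed iteration] by simp
qed

lemma energy_tendsto_zero:
  assumes S: "S \<in> zeros" and r: "strict_mono r" and sub: "(\<lambda>j. P (Suc (r j))) \<longlonglongrightarrow> S"
    and increments: "(\<lambda>n. P (Suc n) - P n) \<longlonglongrightarrow> 0"
  shows "energy S \<longlonglongrightarrow> 0"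
proof -
  have "(\<lambda>j. (1 + \<eta> * L) * norm (P (Suc (r j)) - S)^2 + 2 * \<eta> * L * norm (P (Suc (r j)) - P (r j))^2)
      \<longlonglongrightarrow> (1 + \<eta> * L) * norm (S - S)^2 + 2 * \<eta> * L * norm (0::'a)^2"
    using LIMSEQ_subseq_LIMSEQ[OF increments r]
    by (intro tendsto_intros sub) (simp add: o_def)
  then have upper_lim: "(\<lambda>j. (1 + \<eta> * L) * norm (P (Suc (r j)) - S)^2
      + 2 * \<eta> * L * norm (P (Suc (r j)) - P (r j))^2) \<longlonglongrightarrow> 0"
    by simp
  have upper: "\<forall>\<^sub>F j in sequentially. energy S (r j)
      \<le> (1 + \<eta> * L) * norm (P (Suc (r j)) - S)^2 + 2 * \<eta> * L * norm (P (Suc (r j)) - P (r j))^2"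
    using frb_energy_upper[where F=F, OF F_lipschitz step_pos L_nonneg] by simp
  have nonneg: "\<forall>\<^sub>F j in sequentially. 0 \<le> energy S (r j)"
    using energy_nonneg by simp
  have energy_sub: "(\<lambda>j. energy S (r j)) \<longlonglongrightarrow> 0"
    by (rule tendsto_sandwich[OF nonneg upper tendsto_const upper_lim])
  have "\<forall>i. 0 \<le> energy S i"
    using energy_nonneg by simp
  then obtain l where l: "energy S \<longlonglongrightarrow> l"
    using decseq_convergent[OF energy_decseq[OF S]] by blast
  moreover have "(\<lambda>j. energy S (r j)) \<longlonglongrightarrow> l"
    using LIMSEQ_subseq_LIMSEQ[OF l r] by (simp add: o_def)
  then have "l = 0"
    using energy_sub by (rule LIMSEQ_unique)
  ultimately show ?thesis
    by simp
qed

lemma iterates_tendsto_of_energy: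
  assumes "energy S \<longlonglongrightarrow> 0"
  shows "P \<longlonglongrightarrow> S"
proof -
  have energy_lim: "(\<lambda>n. energy S n / (1 - \<eta> * L)) \<longlonglongrightarrow> 0"
    using assms by (rule tendsto_divide_zero)
  have dist_upper: "\<forall>\<^sub>F n in sequentially. norm (P (Suc n) - S)^2 \<le> energy S n / (1 - \<eta> * L)"
    using energy_lower one_minus_step_L_pos by (simp add: pos_le_divide_eq mult.commute)
  have "\<forall>\<^sub>F n in sequentially. 0 \<le> norm (P (Suc n) - S)^2"
    by simp
  then have "(\<lambda>n. norm (P (Suc n) - S)^2) \<longlonglongrightarrow> 0"
    by (rule tendsto_sandwich[OF _ dist_upper tendsto_const energy_lim])
  then have "(\<lambda>n. P (Suc n)) \<longlonglongrightarrow> S"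
    by (rule LIM_zero_cancel[OF norm_power2_tendsto_zeroD])
  then show ?thesis
    by (rule LIMSEQ_imp_Suc)
qed

theorem iterates_converge:
  assumes "S \<in> zeros"
  shows "\<exists>S'\<in>zeros. P \<longlonglongrightarrow> S'"
proof -
  obtain r S' where r: "strict_mono r" and "((\<lambda>n. P (Suc n)) \<circ> r) \<longlonglongrightarrow> S'"
    using bounded_imp_convergent_subsequence[OF bounded_iterates[OF assms]] by blast
  then have sub: "(\<lambda>j. P (Suc (r j))) \<longlonglongrightarrow> S'"
    by (simp add: o_def)
  note increments = increments_tendsto_zero[OF assms]
  have "S' \<in> zeros"
    by (rule cluster_point_in_zeros[OF r sub increments])
  moreover have "P \<longlonglongrightarrow> S'"
    by (rule iterates_tendsto_of_energy[OF energy_tendsto_zero[OF calculation r sub increments]])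
  ultimately show ?thesis
    by blast
qed

end

definition subdifferential :: "('a::real_inner \<Rightarrow> ereal) \<Rightarrow> 'a \<Rightarrow> 'a set" where
  "subdifferential h x = {q. \<forall>u. h x + ereal (inner q (u - x)) \<le> h u}"

lemma proper_funD:
  assumes "proper_fun h"
  obtains x0 b0 where "h x0 = ereal b0" and "\<And>x. h x \<noteq> - \<infinity>"
proof -
  obtain x0 where "h x0 \<noteq> \<infinity>" and "\<And>x. h x \<noteq> - \<infinity>"
    using assms unfolding proper_fun_def by blast
  then show ?thesis
    using that by (cases "h x0") auto
qed

lemma subdifferential_finite:
  assumes "proper_fun h" and "q \<in> subdifferential h x"
  obtains a where "h x = ereal a"
proof -
  obtain x0 b0 where x0: "h x0 = ereal b0" and ninf: "\<And>x. h x \<noteq> - \<infinity>"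
    using proper_funD[OF assms(1)] by blast
  have "h x + ereal (inner q (x0 - x)) \<le> ereal b0"
    using assms(2) unfolding subdifferential_def x0[symmetric] by blast
  then show ?thesis
    using that ninf[of x] by (cases "h x") auto
qed

lemma subdifferential_monotone:
  assumes "proper_fun h" and q: "q \<in> subdifferential h x" and s: "s \<in> subdifferential h y"
  shows "0 \<le> inner (q - s) (x - y)"
proof -
  obtain a b where a: "h x = ereal a" and b: "h y = ereal b"
    using subdifferential_finite[OF assms(1)] q s by metis
  have "h x + ereal (inner q (y - x)) \<le> h y" and "h y + ereal (inner s (x - y)) \<le> h x"
    using q s unfolding subdifferential_def by blast+
  then have "a + inner q (y - x) \<le> b" and "b + inner s (x - y) \<le> a"
    using a b by simp_all
  then show ?thesis
    by (simp add: inner_diff_left inner_diff_right inner_commute)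
qed

lemma closed_subdifferential_graph:
  assumes proper: "proper_fun h" and closed: "closed_fun h"
  shows "closed {(x, q). q \<in> subdifferential h x}"
  unfolding closed_sequential_limits
proof (intro allI impI, elim conjE)
  fix w :: "nat \<Rightarrow> 'a \<times> 'a" and l
  assume graph: "\<forall>j. w j \<in> {(x, q). q \<in> subdifferential h x}" and lim: "w \<longlonglongrightarrow> l"
  obtain x q where l: "l = (x, q)"
    by fastforce
  have fst_lim: "(\<lambda>j. fst (w j)) \<longlonglongrightarrow> x" and snd_lim: "(\<lambda>j. snd (w j)) \<longlonglongrightarrow> q"
    using tendsto_fst[OF lim] tendsto_snd[OF lim] unfolding l by simp_all
  have "h x + ereal (inner q (u - x)) \<le> h u" for u
  proof (cases "h u")
    case (real b)
    define t where "t j = b - inner (snd (w j)) (u - fst (w j))" for j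
    have "(fst (w j), t j) \<in> {(x, r). h x \<le> ereal r}" for j
      using graph[rule_format, of j] real unfolding subdifferential_def t_def
      by (cases "h (fst (w j))") (auto split: prod.splits dest!: spec[of _ u])
    moreover have "(\<lambda>j. (fst (w j), t j)) \<longlonglongrightarrow> (x, b - inner q (u - x))"
      unfolding t_def by (intro tendsto_intros fst_lim snd_lim)
    ultimately have "(x, b - inner q (u - x)) \<in> {(x, r). h x \<le> ereal r}"
      by (rule closed_sequentially[OF closed[unfolded closed_fun_def]])
    then have "h x \<le> ereal (b - inner q (u - x))"
      by simp
    then show ?thesis
      using real by (cases "h x") auto
  qed (use proper_funD[OF proper] in auto)
  then show "l \<in> {(x, q). q \<in> subdifferential h x}"
    unfolding l subdifferential_def by simp
qed

lemma prox_convex_combination_estimate: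
  fixes h :: "'a::real_inner \<Rightarrow> ereal"
  assumes proper: "proper_fun h" and convex: "ext_convex h" and \<eta>: "0 < \<eta>"
    and prox: "is_arg_min (\<lambda>u. ereal \<eta> * h u + ereal (norm (u - v)^2 / 2)) (\<lambda>_. True) p"
    and a: "h p = ereal a" and b: "h u = ereal b" and t: "0 < t" "t \<le> 1"
  shows "\<eta> * a + inner (v - p) (u - p) - \<eta> * b \<le> t * (norm (u - p)^2 / 2)"
proof -
  define ut where "ut = (1 - t) *\<^sub>R p + t *\<^sub>R u"
  have "h ut \<le> ereal (1 - t) * h p + ereal t * h u"
    using convex t unfolding ext_convex_def ut_def by auto
  then obtain r where r: "h ut = ereal r" and r_le: "r \<le> (1 - t) * a + t * b"
    using a b proper_funD[OF proper] by (cases "h ut") auto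
  have "ereal \<eta> * h p + ereal (norm (p - v)^2 / 2) \<le> ereal \<eta> * h ut + ereal (norm (ut - v)^2 / 2)"
    using prox unfolding is_arg_min_linorder by blast
  then have "\<eta> * a + norm (p - v)^2 / 2 \<le> \<eta> * r + norm (ut - v)^2 / 2"
    using a r by simp
  moreover have "\<eta> * r \<le> \<eta> * ((1 - t) * a + t * b)"
    using r_le \<eta> by (simp add: mult_left_mono)
  moreover have "norm (ut - v)^2 = norm (p - v)^2 + 2 * t * inner (p - v) (u - p) + t * t * norm (u - p)^2"
    unfolding ut_def
    by (simp add: power2_norm_eq_inner inner_add_left inner_add_right inner_diff_left
        inner_diff_right inner_commute algebra_simps)
  moreover have "\<eta> * ((1 - t) * a + t * b) = \<eta> * a - t * (\<eta> * a) + t * (\<eta> * b)"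
    by (simp add: algebra_simps)
  moreover have "2 * t * inner (p - v) (u - p) = - 2 * (t * inner (v - p) (u - p))"
    by (simp add: inner_diff_left algebra_simps)
  ultimately have "t * (\<eta> * a) + t * inner (v - p) (u - p) - t * (\<eta> * b) \<le> t * (t * (norm (u - p)^2 / 2))"
    by linarith
  then have "t * (\<eta> * a + inner (v - p) (u - p) - \<eta> * b) \<le> t * (t * (norm (u - p)^2 / 2))"
    by (simp only: distrib_left right_diff_distrib)
  then show ?thesis
    using t by simp
qed

lemma prox_in_subdifferential:
  fixes h :: "'a::real_inner \<Rightarrow> ereal"
  assumes proper: "proper_fun h" and convex: "ext_convex h" and \<eta>: "0 < \<eta>"
    and prox: "is_arg_min (\<lambda>u. ereal \<eta> * h u + ereal (norm (u - v)^2 / 2)) (\<lambda>_. True) p"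
  shows "(v - p) /\<^sub>R \<eta> \<in> subdifferential h p"
proof -
  obtain x0 b0 where x0: "h x0 = ereal b0" and ninf: "\<And>x. h x \<noteq> - \<infinity>"
    using proper_funD[OF proper] by blast
  have "ereal \<eta> * h p + ereal (norm (p - v)^2 / 2) \<le> ereal \<eta> * h x0 + ereal (norm (x0 - v)^2 / 2)"
    using prox unfolding is_arg_min_linorder by blast
  then obtain a where a: "h p = ereal a"
    using x0 ninf[of p] \<eta> by (cases "h p") auto
  have "ereal a + ereal (inner ((v - p) /\<^sub>R \<eta>) (u - p)) \<le> h u" for u
  proof (cases "h u")
    case (real b)
    have "\<forall>\<^sub>F t in at_right 0. \<eta> * a + inner (v - p) (u - p) - \<eta> * b \<le> t * (norm (u - p)^2 / 2)"
      by (rule eventually_mono[OF eventually_at_right_real[OF zero_less_one]])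
        (rule prox_convex_combination_estimate[OF proper convex \<eta> prox a real]; simp)
    then have "\<eta> * a + inner (v - p) (u - p) - \<eta> * b \<le> 0 * (norm (u - p)^2 / 2)"
      by (intro tendsto_le[OF trivial_limit_at_right_real tendsto_mult_right[OF tendsto_ident_at]
            tendsto_const])
    then have "a + inner (v - p) (u - p) / \<eta> \<le> b"
      using \<eta> by (simp add: field_simps)
    moreover have "inner ((v - p) /\<^sub>R \<eta>) (u - p) = inner (v - p) (u - p) / \<eta>"
      by (simp only: inner_scaleR_left) (simp add: field_simps)
    ultimately show ?thesis
      using real by simp
  qed (simp_all add: ninf)
  then show ?thesis
    unfolding subdifferential_def a by simp
qed

lemma M0_map_linear: "linear (M0_map A B)"
  unfolding M0_map_def
  by (rule linearI)
    (auto simp: matrix_vector_right_distrib matrix_vector_mult_scaleR scaleR_vector_matrix_assoc algebra_simps)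

lemma inner_M0_map_self: "inner (M0_map A B w) w = 0"
proof -
  have adjoint: "inner (y v* C) x = inner (C *v x) y" for x y and C :: "real^'k^'l"
    by (metis dot_lmul_matrix inner_commute)
  show ?thesis
    unfolding M0_map_def by (cases w) (simp add: adjoint inner_diff_left)
qed

type_synonym ('n, 'm, 'p) primal_dual = "(real^'n) \<times> (real^'m) \<times> (real^'p)"

definition lagrangian_operator :: "real^'n^'p \<Rightarrow> real^'m^'p \<Rightarrow> real^'p \<Rightarrow>
    ('n, 'm, 'p) primal_dual \<Rightarrow> ('n, 'm, 'p) primal_dual" where
  "lagrangian_operator A B c w = M0_map A B w + (0, 0, c)"

lemma lagrangian_operator_diff:
  "lagrangian_operator A B c u - lagrangian_operator A B c v = M0_map A B (u - v)"
  by (simp add: lagrangian_operator_def linear_diff[OF M0_map_linear])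

lemma lagrangian_operator_skew:
  "inner (lagrangian_operator A B c u - lagrangian_operator A B c v) (u - v) = 0"
  by (simp add: lagrangian_operator_diff inner_M0_map_self)

lemma lagrangian_operator_lipschitz:
  assumes "onorm (M0_map A B) \<le> L"
  shows "norm (lagrangian_operator A B c u - lagrangian_operator A B c v) \<le> L * norm (u - v)"
proof -
  have "norm (M0_map A B (u - v)) \<le> onorm (M0_map A B) * norm (u - v)"
    using onorm M0_map_linear linear_conv_bounded_linear by blast
  also have "\<dots> \<le> L * norm (u - v)"
    using assms by (intro mult_right_mono) auto
  finally show ?thesis
    by (simp add: lagrangian_operator_diff)
qed

definition split_subdifferential :: "(real^'n \<Rightarrow> ereal) \<Rightarrow> (real^'m \<Rightarrow> ereal) \<Rightarrow>
    (('n, 'm, 'p::finite) primal_dual \<times> ('n, 'm, 'p) primal_dual) set" where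
  "split_subdifferential f g =
     {((a, b, d), (q, s, t)). q \<in> subdifferential f a \<and> s \<in> subdifferential g b \<and> t = 0}"

lemma split_subdifferential_monotone:
  assumes "proper_fun f" "proper_fun g"
    and "(u, q) \<in> split_subdifferential f g" "(v, s) \<in> split_subdifferential f g"
  shows "0 \<le> inner (q - s) (u - v)"
  using assms subdifferential_monotone[OF assms(1)] subdifferential_monotone[OF assms(2)]
  by (force simp: split_subdifferential_def)

lemma closed_split_subdifferential:
  assumes "proper_fun f" "closed_fun f" "proper_fun g" "closed_fun g"
  shows "closed (split_subdifferential f g)"
proof -
  have split: "split_subdifferential f g =
      (\<lambda>w. (fst (fst w), fst (snd w))) -` {(x, q). q \<in> subdifferential f x}
      \<inter> (\<lambda>w. (fst (snd (fst w)), fst (snd (snd w)))) -` {(x, q). q \<in> subdifferential g x}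
      \<inter> (\<lambda>w. snd (snd (snd w))) -` {0}"
    by (fastforce simp: split_subdifferential_def)
  show ?thesis
    unfolding split using assms
    by (intro closed_Int closed_vimage closed_subdifferential_graph closed_singleton continuous_intros)
qed

lemma split_subdifferential_zero_iff:
  "((xs, zs, ys), - lagrangian_operator A B c (xs, zs, ys)) \<in> split_subdifferential f g \<longleftrightarrow>
     A *v xs + B *v zs = c \<and> - (transpose A *v ys) \<in> subdifferential f xs
     \<and> - (transpose B *v ys) \<in> subdifferential g zs"
  by (auto simp: split_subdifferential_def lagrangian_operator_def M0_map_def algebra_simps)

lemma saddle_point_primal_minimality:
  fixes f :: "real^'n \<Rightarrow> ereal" and g :: "real^'m \<Rightarrow> ereal"
    and A :: "real^'n^'p" and B :: "real^'m^'p" and c :: "real^'p"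
  assumes min_xz: "\<And>u r. lagrangian0 f g A B c x0 z0 y0 \<le> lagrangian0 f g A B c u r y0"
    and a0: "f x0 = ereal a0" and b0: "g z0 = ereal b0"
    and nf: "\<And>u. f u \<noteq> - \<infinity>" and ng: "\<And>r. g r \<noteq> - \<infinity>"
    and feasible: "A *v x0 + B *v z0 = c"
  shows "- (transpose A *v y0) \<in> subdifferential f x0 \<and> - (transpose B *v y0) \<in> subdifferential g z0"
proof
  show "- (transpose A *v y0) \<in> subdifferential f x0"
  proof -
    have "f x0 + ereal (inner (- (transpose A *v y0)) (u - x0)) \<le> f u" for u
    proof (cases "f u")
      case (real a)
      have "A *v u + B *v z0 - c = A *v (u - x0)"
        using feasible by (simp add: matrix_vector_mult_diff_distrib algebra_simps)
      then have "y0 \<bullet> (A *v u + B *v z0 - c) = inner (transpose A *v y0) (u - x0)"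
        by (simp add: dot_lmul_matrix)
      then show ?thesis
        using min_xz[of u z0] a0 b0 real feasible by (simp add: lagrangian0_def)
    qed (use nf in auto)
    then show ?thesis
      unfolding subdifferential_def by blast
  qed
  show "- (transpose B *v y0) \<in> subdifferential g z0"
  proof -
    have "g z0 + ereal (inner (- (transpose B *v y0)) (r - z0)) \<le> g r" for r
    proof (cases "g r")
      case (real b)
      have "A *v x0 + B *v r - c = B *v (r - z0)"
        using feasible by (simp add: matrix_vector_mult_diff_distrib algebra_simps)
      then have "y0 \<bullet> (A *v x0 + B *v r - c) = inner (transpose B *v y0) (r - z0)"
        by (simp add: dot_lmul_matrix)
      then show ?thesis
        using min_xz[of x0 r] a0 b0 real feasible by (simp add: lagrangian0_def)
    qed (use ng in auto)
    then show ?thesis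
      unfolding subdifferential_def by blast
  qed
qed

lemma saddle_point_imp_zero:
  fixes f :: "real^'n \<Rightarrow> ereal" and g :: "real^'m \<Rightarrow> ereal"
    and A :: "real^'n^'p" and B :: "real^'m^'p" and c :: "real^'p"
  assumes pf: "proper_fun f" and pg: "proper_fun g"
    and saddle: "has_saddle_point (\<lambda>(u, r) w. lagrangian0 f g A B c u r w)"
  shows "\<exists>S. (S, - lagrangian_operator A B c S) \<in> split_subdifferential f g"
proof -
  obtain x0 z0 y0 where
    max_y: "\<And>y. lagrangian0 f g A B c x0 z0 y \<le> lagrangian0 f g A B c x0 z0 y0" and
    min_xz: "\<And>u r. lagrangian0 f g A B c x0 z0 y0 \<le> lagrangian0 f g A B c u r y0"
    using saddle unfolding has_saddle_point_def by fastforce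
  obtain u1 a1 where u1: "f u1 = ereal a1" and nf: "\<And>u. f u \<noteq> - \<infinity>"
    using proper_funD[OF pf] by blast
  obtain r1 b1 where r1: "g r1 = ereal b1" and ng: "\<And>r. g r \<noteq> - \<infinity>"
    using proper_funD[OF pg] by blast
  obtain a0 b0 where a0: "f x0 = ereal a0" and b0: "g z0 = ereal b0"
    using min_xz[of u1 r1] u1 r1 nf[of x0] ng[of z0]
    by (cases "f x0"; cases "g z0") (auto simp: lagrangian0_def)
  define res where "res = A *v x0 + B *v z0 - c"
  have "(y0 + res) \<bullet> res \<le> y0 \<bullet> res"
    using max_y[of "y0 + res"] a0 b0 unfolding lagrangian0_def res_def by simp
  then have "res \<bullet> res \<le> 0"
    by (simp add: inner_add_left)
  then have "res = 0"
    by (metis antisym inner_eq_zero_iff inner_ge_zero)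
  then have feasible: "A *v x0 + B *v z0 = c"
    unfolding res_def by simp
  then show ?thesis
    using saddle_point_primal_minimality[OF min_xz a0 b0 nf ng feasible] split_subdifferential_zero_iff
    by blast
qed

lemma zero_imp_optimal:
  assumes "((xs, zs, ys), - lagrangian_operator A B c (xs, zs, ys)) \<in> split_subdifferential f g"
    and feasible: "A *v u + B *v r = c"
  shows "f xs + g zs \<le> f u + g r"
proof -
  have "A *v xs + B *v zs = c" and sf: "- (transpose A *v ys) \<in> subdifferential f xs"
    and sg: "- (transpose B *v ys) \<in> subdifferential g zs"
    using assms(1) split_subdifferential_zero_iff by blast+
  then have "A *v (u - xs) + B *v (r - zs) = 0"
    using feasible by (simp add: matrix_vector_mult_diff_distrib algebra_simps)
  then have "inner ys (A *v (u - xs)) + inner ys (B *v (r - zs)) = 0"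
    by (simp flip: inner_add_right)
  then have orthogonal: "inner (- (transpose A *v ys)) (u - xs) + inner (- (transpose B *v ys)) (r - zs) = 0"
    by (simp add: dot_lmul_matrix)
  have "(f xs + ereal (inner (- (transpose A *v ys)) (u - xs)))
      + (g zs + ereal (inner (- (transpose B *v ys)) (r - zs))) \<le> f u + g r"
    using sf sg unfolding subdifferential_def by (intro add_mono) auto
  also have "(f xs + ereal (inner (- (transpose A *v ys)) (u - xs)))
      + (g zs + ereal (inner (- (transpose B *v ys)) (r - zs)))
      = (f xs + g zs) + ereal (inner (- (transpose A *v ys)) (u - xs) + inner (- (transpose B *v ys)) (r - zs))"
    by (simp only: plus_ereal.simps(1)[symmetric] ac_simps)
  finally show ?thesis
    unfolding orthogonal by simp
qed

lemma linearized_admm_step: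
  fixes f :: "real^'n \<Rightarrow> ereal" and g :: "real^'m \<Rightarrow> ereal"
    and A :: "real^'n^'p" and B :: "real^'m^'p" and c :: "real^'p"
  defines "F \<equiv> lagrangian_operator A B c"
  assumes f: "proper_fun f" "ext_convex f" and g: "proper_fun g" "ext_convex g" and \<eta>: "0 < \<eta>"
    and x_next: "is_arg_min (\<lambda>u. ereal \<eta> * f u + ereal ((norm (u - (x - (2 * \<eta>) *\<^sub>R (transpose A *v y)
            + \<eta> *\<^sub>R (transpose A *v y_prev))))\<^sup>2 / 2)) (\<lambda>_. True) x_next"
    and z_next: "is_arg_min (\<lambda>r. ereal \<eta> * g r + ereal ((norm (r - (z - (2 * \<eta>) *\<^sub>R (transpose B *v y)
            + \<eta> *\<^sub>R (transpose B *v y_prev))))\<^sup>2 / 2)) (\<lambda>_. True) z_next"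
    and y_next: "y_next = y + (2 * \<eta>) *\<^sub>R (A *v x) + (2 * \<eta>) *\<^sub>R (B *v z)
       - \<eta> *\<^sub>R (A *v x_prev) - \<eta> *\<^sub>R (B *v z_prev) - \<eta> *\<^sub>R c"
  shows "((x_next, z_next, y_next),
      ((x, z, y) - \<eta> *\<^sub>R (2 *\<^sub>R F (x, z, y) - F (x_prev, z_prev, y_prev)) - (x_next, z_next, y_next)) /\<^sub>R \<eta>)
    \<in> split_subdifferential f g"
proof -
  define x_hat where "x_hat = x - (2 * \<eta>) *\<^sub>R (transpose A *v y) + \<eta> *\<^sub>R (transpose A *v y_prev)"
  define z_hat where "z_hat = z - (2 * \<eta>) *\<^sub>R (transpose B *v y) + \<eta> *\<^sub>R (transpose B *v y_prev)"
  have "(x, z, y) - \<eta> *\<^sub>R (2 *\<^sub>R F (x, z, y) - F (x_prev, z_prev, y_prev)) = (x_hat, z_hat, y_next)"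
    unfolding F_def lagrangian_operator_def M0_map_def x_hat_def z_hat_def y_next
    by (simp add: algebra_simps) (simp add: vec_eq_iff)
  moreover have "(x_hat - x_next) /\<^sub>R \<eta> \<in> subdifferential f x_next"
    using prox_in_subdifferential[OF f \<eta>] x_next unfolding x_hat_def by blast
  moreover have "(z_hat - z_next) /\<^sub>R \<eta> \<in> subdifferential g z_next"
    using prox_in_subdifferential[OF g \<eta>] z_next unfolding z_hat_def by blast
  ultimately show ?thesis
    by (simp add: split_subdifferential_def)
qed

theorem corollary1:
  fixes f :: "real^'n \<Rightarrow> ereal" and g :: "real^'m \<Rightarrow> ereal"
    and A :: "real^'n^'p" and B :: "real^'m^'p" and c :: "real^'p"
    and L \<eta> :: real
    and x :: "int \<Rightarrow> real^'n" and z :: "int \<Rightarrow> real^'m" and y :: "int \<Rightarrow> real^'p"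
  assumes f: "proper_fun f" "ext_convex f" "closed_fun f"
    and g: "proper_fun g" "ext_convex g" "closed_fun g"
    and saddle: "has_saddle_point (\<lambda>(u, r) w. lagrangian0 f g A B c u r w)"
    and L: "L > 0" "onorm (M0_map A B) \<le> L"
    and eta: "0 < \<eta>" "\<eta> < 1 / (2 * L)"
    and x_step: "\<And>k::int. k \<ge> 0 \<Longrightarrow>
       is_arg_min (\<lambda>u. ereal \<eta> * f u + ereal ((norm (u - (x k - (2 * \<eta>) *\<^sub>R (transpose A *v y k)
            + \<eta> *\<^sub>R (transpose A *v y (k - 1)))))\<^sup>2 / 2)) (\<lambda>_. True) (x (k + 1))"
    and z_step: "\<And>k::int. k \<ge> 0 \<Longrightarrow>
       is_arg_min (\<lambda>r. ereal \<eta> * g r + ereal ((norm (r - (z k - (2 * \<eta>) *\<^sub>R (transpose B *v y k)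
            + \<eta> *\<^sub>R (transpose B *v y (k - 1)))))\<^sup>2 / 2)) (\<lambda>_. True) (z (k + 1))"
    and y_step: "\<And>k::int. k \<ge> 0 \<Longrightarrow>
       y (k + 1) = y k + (2 * \<eta>) *\<^sub>R (A *v x k) + (2 * \<eta>) *\<^sub>R (B *v z k)
                   - \<eta> *\<^sub>R (A *v x (k - 1)) - \<eta> *\<^sub>R (B *v z (k - 1)) - \<eta> *\<^sub>R c"
  shows "\<exists>xs zs. (\<lambda>k::nat. x (int k)) \<longlonglongrightarrow> xs \<and> (\<lambda>k::nat. z (int k)) \<longlonglongrightarrow> zs
     \<and> A *v xs + B *v zs = c
     \<and> (\<forall>u r. A *v u + B *v r = c \<longrightarrow> f xs + g zs \<le> f u + g r)"
proof -
  \<comment> \<open>Shifted by one, so that P 0 is the second initial point with index -1.\<close>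
  define P where "P n = (x (int n - 1), z (int n - 1), y (int n - 1))" for n
  interpret forward_reflected_backward "split_subdifferential f g" "lagrangian_operator A B c" \<eta> L P
  proof
    show "2 * \<eta> * L < 1"
      using eta(2) L(1) by (simp add: pos_less_divide_eq mult.commute mult.left_commute)
    show "(P (Suc (Suc n)), (P (Suc n) - \<eta> *\<^sub>R (2 *\<^sub>R lagrangian_operator A B c (P (Suc n))
        - lagrangian_operator A B c (P n)) - P (Suc (Suc n))) /\<^sub>R \<eta>) \<in> split_subdifferential f g" for n
      using linearized_admm_step[OF f(1,2) g(1,2) eta(1) x_step z_step y_step, of "int n"]
      by (simp add: P_def add.commute)
    show "0 \<le> inner (lagrangian_operator A B c u - lagrangian_operator A B c v) (u - v)" for u v
      using lagrangian_operator_skew[of A B c u v] by simp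
  qed (use f g L eta split_subdifferential_monotone closed_split_subdifferential
      lagrangian_operator_lipschitz in auto)
  obtain S where "S \<in> zeros"
    using saddle_point_imp_zero[OF f(1) g(1) saddle] unfolding zeros_def by blast
  then obtain xs zs ys where zero: "(xs, zs, ys) \<in> zeros" and "P \<longlonglongrightarrow> (xs, zs, ys)"
    using iterates_converge by (metis prod_cases3)
  then have "(\<lambda>k. (x (int k), z (int k), y (int k))) \<longlonglongrightarrow> (xs, zs, ys)"
    using LIMSEQ_Suc by (force simp: P_def)
  then have "(\<lambda>k. x (int k)) \<longlonglongrightarrow> xs" and "(\<lambda>k. z (int k)) \<longlonglongrightarrow> zs"
    using tendsto_fst tendsto_snd by fastforce+
  then show ?thesis
    using zero zero_imp_optimal split_subdifferential_zero_iff unfolding zeros_def by blast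
qed

end
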